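(* Let $\alpha_1,\alpha_2,\beta_2,\beta_3,\beta_4,\delta_1,\delta_2,\delta_4$ be positive real constants, let $i_M>0$, and let $i\in C(\mathbb{R}_+,[0,i_M])$, where $\mathbb{R}_+=[0,\infty)$. Consider the system $$u_1'=u_1(1-u_1-\alpha_1u_2-\delta_1u_3),\qquad u_2'=\beta_2u_2(1-u_2-\alpha_2u_1-\delta_2u_4),$$ $$u_3'=\beta_3(u_2-u_3),\qquad u_4'=\beta_4\big(i(t)-u_4-\delta_4u_4u_2\big).$$ If $\mathbf{u}(0)=(u_1(0),u_2(0),u_3(0),u_4(0))\in\mathbb{R}_+^4$, then this system has a unique solution $\mathbf{u}$ defined for all $t\in\mathbb{R}_+$, and it satisfies $\mathbf{u}(t)\in\mathbb{R}_+^4$ for all $t\in\mathbb{R}_+$.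
   Context: This is a non-dimensionalised model of normal cell density $u_1$, tumour cell density $u_2$, excess acid concentration $u_3$ and chemotherapy drug concentration $u_4$, with drug infusion rate $i(t)$; $'$ denotes $d/dt$. *)

theory Defs
  imports "HOL-Analysis.Analysis"
begin

definition tumour_sol ::
  "real \<Rightarrow> real \<Rightarrow> real \<Rightarrow> real \<Rightarrow> real \<Rightarrow> real \<Rightarrow> real \<Rightarrow> real \<Rightarrow>
   (real \<Rightarrow> real) \<Rightarrow> real \<Rightarrow> real \<Rightarrow> real \<Rightarrow> real \<Rightarrow>
   (real \<Rightarrow> real) \<Rightarrow> (real \<Rightarrow> real) \<Rightarrow> (real \<Rightarrow> real) \<Rightarrow> (real \<Rightarrow> real) \<Rightarrow> bool"
where
  "tumour_sol \<alpha>1 \<alpha>2 \<beta>2 \<beta>3 \<beta>4 \<delta>1 \<delta>2 \<delta>4 i a1 a2 a3 a4 u1 u2 u3 u4 \<longleftrightarrow>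
     u1 0 = a1 \<and> u2 0 = a2 \<and> u3 0 = a3 \<and> u4 0 = a4 \<and>
     (\<forall>t\<ge>0.
        (u1 has_real_derivative
           u1 t * (1 - u1 t - \<alpha>1 * u2 t - \<delta>1 * u3 t)) (at t within {0..}) \<and>
        (u2 has_real_derivative
           \<beta>2 * u2 t * (1 - u2 t - \<alpha>2 * u1 t - \<delta>2 * u4 t)) (at t within {0..}) \<and>
        (u3 has_real_derivative \<beta>3 * (u2 t - u3 t)) (at t within {0..}) \<and>
        (u4 has_real_derivative
           \<beta>4 * (i t - u4 t - \<delta>4 * u4 t * u2 t)) (at t within {0..}))"

end

(*
  Clamping the vector field to a box [0, M]^4, with M at least 1, the drug bound iM and the
  initial data, gives a field that is globally Lipschitz, so Picard iteration converges on
  every [0, T] to a global solution.  On each face of the box the clamped field points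
  inward (u_k = 0 forces u_k' >= 0 and u_k = M forces u_k' <= 0), so the solution never
  leaves the box, the clamp is inactive along it, and it solves the original system with
  nonnegative components.  Uniqueness holds because the polynomial field is Lipschitz on
  bounded sets: for two solutions x and y the energy |x - y|^2 exp (-2 K t) is
  nonincreasing and vanishes at t = 0.
*)

theory Submission
  imports Defs
begin

section \<open>Picard iteration for globally Lipschitz fields\<close>

lemma at_within_Icc_eq_Ici:
  fixes t :: real
  assumes "0 \<le> t" "t < T"
  shows "at t within {0..T} = at t within {0..}"
  using assms by (intro at_within_nhd[where S="{..<T}"]) auto

lemma integral_has_vector_derivative_Ici:
  fixes f :: "real \<Rightarrow> 'a::banach"
  assumes "continuous_on {0..} f" "0 \<le> t"
  shows "((\<lambda>u. integral {0..u} f) has_vector_derivative f t) (at t within {0..})"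
proof -
  have "continuous_on {0..t+1} f"
    using assms(1) by (rule continuous_on_subset) auto
  with assms(2) show ?thesis
    using integral_has_vector_derivative[of 0 "t+1" f t] at_within_Icc_eq_Ici[of t "t+1"] by simp
qed

lemma continuous_on_Ici_if_continuous_on_Icc:
  fixes g :: "real \<Rightarrow> 'a::topological_space"
  assumes "\<And>T. continuous_on {0..T} g"
  shows "continuous_on {0..} g"
  unfolding continuous_on_eq_continuous_within
proof
  fix t :: real
  assume "t \<in> {0..}"
  then have "continuous (at t within {0..t+1}) g"
    using assms[of "t+1"] by (simp add: continuous_on_eq_continuous_within)
  with \<open>t \<in> {0..}\<close> show "continuous (at t within {0..}) g"
    by (simp add: at_within_Icc_eq_Ici)
qed

lemma continuous_on_compose_lipschitz_family:
  fixes F :: "real \<Rightarrow> 'a::real_normed_vector \<Rightarrow> 'b::real_normed_vector"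
  assumes cont: "\<And>x. continuous_on S (\<lambda>t. F t x)"
    and lip: "\<And>t. t \<in> S \<Longrightarrow> L-lipschitz_on UNIV (F t)"
    and g: "continuous_on S g"
  shows "continuous_on S (\<lambda>t. F t (g t))"
  unfolding continuous_on_def
proof
  fix t0
  assume t0: "t0 \<in> S"
  have "((\<lambda>t. L * norm (g t - g t0)) \<longlongrightarrow> L * norm (g t0 - g t0)) (at t0 within S)"
    using g t0 unfolding continuous_on_def by (intro tendsto_intros) auto
  then have "((\<lambda>t. L * norm (g t - g t0)) \<longlongrightarrow> 0) (at t0 within S)"
    by simp
  then have "((\<lambda>t. F t (g t) - F t (g t0)) \<longlongrightarrow> 0) (at t0 within S)"
    by (rule Lim_null_comparison[rotated])
      (unfold eventually_at_filter, intro always_eventually allI impI lipschitz_on_normD[OF lip], simp_all)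
  moreover have "((\<lambda>t. F t (g t0)) \<longlongrightarrow> F t0 (g t0)) (at t0 within S)"
    using cont t0 by (simp add: continuous_on_def)
  ultimately show "((\<lambda>t. F t (g t)) \<longlongrightarrow> F t0 (g t0)) (at t0 within S)"
    by (rule Lim_transform[rotated])
qed

lemma integral_power_Icc_0:
  fixes t :: real
  assumes "0 \<le> t"
  shows "integral {0..t} (\<lambda>s. s ^ n) = t ^ Suc n / Suc n"
proof -
  have "((\<lambda>s. s ^ Suc n / Suc n) has_real_derivative s ^ n) (at s within {0..t})" for s :: real
    using DERIV_cdivide[OF DERIV_pow[of "Suc n" s "{0..t}"], of "Suc n"] by (simp del: of_nat_Suc)
  then have "((\<lambda>s. s ^ n) has_integral t ^ Suc n / Suc n - 0 ^ Suc n / Suc n) {0..t}"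
    using assms
    by (intro fundamental_theorem_of_calculus) (simp_all add: has_real_derivative_iff_has_vector_derivative)
  then show ?thesis
    by (simp add: integral_unique)
qed

locale lipschitz_ivp =
  fixes F :: "real \<Rightarrow> 'a::banach \<Rightarrow> 'a" and L :: real
  assumes continuous_in_time: "\<And>x. continuous_on {0..} (\<lambda>t. F t x)"
    and lipschitz: "\<And>t. t \<in> {0..} \<Longrightarrow> L-lipschitz_on UNIV (F t)"
begin

lemma lipschitz_const_nonneg: "0 \<le> L"
  using lipschitz[of 0] by (simp add: lipschitz_on_nonneg)

lemma continuous_on_compose:
  "continuous_on {0..} x \<Longrightarrow> continuous_on {0..} (\<lambda>s. F s (x s))"
  by (rule continuous_on_compose_lipschitz_family[OF continuous_in_time lipschitz])

lemma integrable_compose: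
  "continuous_on {0..} x \<Longrightarrow> (\<lambda>s. F s (x s)) integrable_on {0..t}"
  by (intro integrable_continuous_real continuous_on_subset[OF continuous_on_compose]) auto

definition picard_step :: "'a \<Rightarrow> (real \<Rightarrow> 'a) \<Rightarrow> real \<Rightarrow> 'a" where
  "picard_step a x t = a + integral {0..t} (\<lambda>s. F s (x s))"

lemma picard_step_has_vector_derivative:
  assumes "continuous_on {0..} x" "0 \<le> t"
  shows "(picard_step a x has_vector_derivative F t (x t)) (at t within {0..})"
  using has_vector_derivative_add[OF has_vector_derivative_const
      integral_has_vector_derivative_Ici[OF continuous_on_compose[OF assms(1)] assms(2)]]
  by (simp add: picard_step_def[abs_def])

lemma continuous_on_picard_step:
  "continuous_on {0..} x \<Longrightarrow> continuous_on {0..} (picard_step a x)"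
  by (rule continuous_on_vector_derivative) (auto intro: picard_step_has_vector_derivative)

definition picard_iterate :: "'a \<Rightarrow> nat \<Rightarrow> real \<Rightarrow> 'a" where
  "picard_iterate a n = (picard_step a ^^ n) (\<lambda>_. a)"

lemma picard_iterate_0 [simp]: "picard_iterate a 0 = (\<lambda>_. a)"
  by (simp add: picard_iterate_def)

lemma picard_iterate_Suc [simp]: "picard_iterate a (Suc n) = picard_step a (picard_iterate a n)"
  by (simp add: picard_iterate_def)

lemma continuous_on_picard_iterate: "continuous_on {0..} (picard_iterate a n)"
  by (induction n) (simp_all add: continuous_on_picard_step)

lemma norm_picard_step_diff_le:
  assumes "continuous_on {0..} x" "continuous_on {0..} y" "g integrable_on {0..t}"
    and "\<And>s. s \<in> {0..t} \<Longrightarrow> L * norm (x s - y s) \<le> g s"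
  shows "norm (picard_step a x t - picard_step a y t) \<le> integral {0..t} g"
proof -
  have "picard_step a x t - picard_step a y t = integral {0..t} (\<lambda>s. F s (x s) - F s (y s))"
    using integral_diff[OF integrable_compose[OF assms(1)] integrable_compose[OF assms(2)]]
    by (simp add: picard_step_def)
  also have "norm \<dots> \<le> integral {0..t} g"
  proof (rule integral_norm_bound_integral)
    show "(\<lambda>s. F s (x s) - F s (y s)) integrable_on {0..t}"
      by (intro integrable_diff integrable_compose assms(1,2))
    fix s
    assume "s \<in> {0..t}"
    then show "norm (F s (x s) - F s (y s)) \<le> g s"
      using lipschitz_on_normD[OF lipschitz, of s "x s" "y s"] assms(4)[of s] by auto
  qed (fact assms(3))
  finally show ?thesis .
qed

lemma norm_picard_iterate_diff_le:
  assumes B: "\<And>s. s \<in> {0..T} \<Longrightarrow> norm (F s a) \<le> B" and "0 \<le> t" "t \<le> T"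
  shows "norm (picard_iterate a (Suc n) t - picard_iterate a n t) \<le> B * L ^ n * t ^ Suc n / fact (Suc n)"
  using assms(2,3)
proof (induction n arbitrary: t)
  case 0
  have "norm (picard_iterate a 1 t - picard_iterate a 0 t) = norm (integral {0..t} (\<lambda>s. F s a))"
    by (simp add: picard_step_def)
  also have "\<dots> \<le> integral {0..t} (\<lambda>s. B)"
    using 0 integrable_compose[of "\<lambda>_. a"]
    by (intro integral_norm_bound_integral B) auto
  finally show ?case
    using 0 by (simp add: mult.commute)
next
  case (Suc n)
  let ?X = "picard_iterate a"
  have "norm (picard_step a (?X (Suc n)) t - picard_step a (?X n) t)
      \<le> integral {0..t} (\<lambda>s. B * L ^ Suc n / fact (Suc n) * s ^ Suc n)"
  proof (rule norm_picard_step_diff_le[OF continuous_on_picard_iterate continuous_on_picard_iterate])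
    show "(\<lambda>s. B * L ^ Suc n / fact (Suc n) * s ^ Suc n) integrable_on {0..t}"
      by (intro integrable_continuous_real continuous_intros)
    fix s
    assume "s \<in> {0..t}"
    then have "L * norm (?X (Suc n) s - ?X n s) \<le> L * (B * L ^ n * s ^ Suc n / fact (Suc n))"
      using Suc.IH[of s] Suc.prems lipschitz_const_nonneg by (intro mult_left_mono) auto
    then show "L * norm (?X (Suc n) s - ?X n s) \<le> B * L ^ Suc n / fact (Suc n) * s ^ Suc n"
      by (simp add: field_simps)
  qed
  also have "\<dots> = B * L ^ Suc n / fact (Suc n) * (t ^ Suc (Suc n) / Suc (Suc n))"
    using Suc.prems by (simp add: integral_power_Icc_0 del: power_Suc of_nat_Suc fact_Suc)
  also have "\<dots> = B * L ^ Suc n * t ^ Suc (Suc n) / fact (Suc (Suc n))"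
    by (simp add: fact_Suc[of "Suc n"] del: power_Suc of_nat_Suc)
  finally show ?case
    by simp
qed

lemma picard_iterate_uniform_limit:
  obtains x where "\<And>T. uniform_limit {0..T} (picard_iterate a) x sequentially"
proof -
  define d where "d n t = picard_iterate a (Suc n) t - picard_iterate a n t" for n t
  have series: "uniform_limit {0..T} (\<lambda>n t. \<Sum>i<n. d i t) (\<lambda>t. \<Sum>i. d i t) sequentially" for T
  proof -
    have "compact ((\<lambda>s. F s a) ` {0..T})"
      by (intro compact_continuous_image continuous_on_subset[OF continuous_in_time]) auto
    then obtain B where B: "B > 0" "\<And>s. s \<in> {0..T} \<Longrightarrow> norm (F s a) \<le> B"
      by (auto dest!: compact_imp_bounded simp: bounded_pos)
    have "norm (d n t) \<le> B * T * (inverse (fact n) * (L * T) ^ n)" if "t \<in> {0..T}" for n t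
    proof -
      have "norm (d n t) \<le> B * L ^ n * t ^ Suc n / fact (Suc n)"
        unfolding d_def using that by (intro norm_picard_iterate_diff_le[OF B(2)]) auto
      also have "\<dots> \<le> B * L ^ n * T ^ Suc n / fact n"
        using that B(1) lipschitz_const_nonneg
        by (intro divide_mono mult_left_mono power_mono fact_mono) auto
      also have "\<dots> = B * T * (inverse (fact n) * (L * T) ^ n)"
        by (simp add: power_mult_distrib field_simps)
      finally show ?thesis .
    qed
    moreover have "summable (\<lambda>n. B * T * (inverse (fact n) * (L * T) ^ n))"
      by (rule summable_mult[OF summable_exp])
    ultimately show ?thesis
      by (rule Weierstrass_m_test)
  qed
  have "picard_iterate a = (\<lambda>n t. a + (\<Sum>i<n. d i t))"
    using sum_lessThan_telescope[of "\<lambda>i. picard_iterate a i _"] by (simp add: d_def fun_eq_iff)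
  then have "uniform_limit {0..T} (picard_iterate a) (\<lambda>t. a + (\<Sum>i. d i t)) sequentially" for T
    using uniform_limit_add[OF uniform_limit_const[where c="\<lambda>_. a"] series] by simp
  then show ?thesis
    by (rule that)
qed

lemma picard_limit_is_fixed_point:
  assumes lim: "\<And>T. uniform_limit {0..T} (picard_iterate a) x sequentially"
    and x: "continuous_on {0..} x" and t: "0 \<le> t"
  shows "x t = picard_step a x t"
proof -
  let ?X = "picard_iterate a"
  have "uniform_limit {0..t} (\<lambda>n s. L *\<^sub>R ?X n s) (\<lambda>s. L *\<^sub>R x s) sequentially"
    by (intro uniform_limit_intros lim)
  then have "uniform_limit {0..t} (\<lambda>n s. F s (?X n s)) (\<lambda>s. F s (x s)) sequentially"
  proof (rule metric_uniform_limit_imp_uniform_limit[OF _ always_eventually], intro allI ballI)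
    fix n s
    assume "s \<in> {0..t}"
    then have "dist (F s (?X n s)) (F s (x s)) \<le> L * dist (?X n s) (x s)"
      by (intro lipschitz_onD[OF lipschitz]) auto
    then show "dist (F s (?X n s)) (F s (x s)) \<le> dist (L *\<^sub>R ?X n s) (L *\<^sub>R x s)"
      using lipschitz_const_nonneg by (simp add: dist_norm flip: scaleR_diff_right)
  qed
  then obtain I J where I: "\<And>n. ((\<lambda>s. F s (?X n s)) has_integral I n) {0..t}"
    and J: "((\<lambda>s. F s (x s)) has_integral J) {0..t}" and IJ: "I \<longlonglongrightarrow> J"
    by (rule uniform_limit_integral)
      (auto intro: continuous_on_subset[OF continuous_on_compose] continuous_on_picard_iterate)
  have "(\<lambda>n. ?X (Suc n) t) \<longlonglongrightarrow> picard_step a x t"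
    using tendsto_add[OF tendsto_const IJ]
    by (simp add: picard_step_def integral_unique[OF I] integral_unique[OF J])
  moreover have "(\<lambda>n. ?X (Suc n) t) \<longlonglongrightarrow> x t"
    using LIMSEQ_Suc[OF tendsto_uniform_limitI[OF lim[of t]]] t by simp
  ultimately show ?thesis
    by (rule LIMSEQ_unique[rotated])
qed

lemma exists_solution:
  "\<exists>x. x 0 = a \<and> (\<forall>t\<ge>0. (x has_vector_derivative F t (x t)) (at t within {0..}))"
proof -
  obtain x where lim: "\<And>T. uniform_limit {0..T} (picard_iterate a) x sequentially"
    using picard_iterate_uniform_limit[of a] by blast
  have "continuous_on {0..T} x" for T
    by (rule uniform_limit_theorem[OF _ lim])
      (auto intro!: always_eventually continuous_on_subset[OF continuous_on_picard_iterate])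
  then have x: "continuous_on {0..} x"
    by (rule continuous_on_Ici_if_continuous_on_Icc)
  have "x 0 = a"
    using picard_limit_is_fixed_point[OF lim x, of 0] by (simp add: picard_step_def)
  moreover have "(x has_vector_derivative F t (x t)) (at t within {0..})" if "0 \<le> t" for t
    using that picard_limit_is_fixed_point[OF lim x]
    by (intro has_vector_derivative_transform[OF _ _ picard_step_has_vector_derivative[OF x that]]) auto
  ultimately show ?thesis
    by blast
qed

end

section \<open>Uniqueness\<close>

lemma has_real_derivative_inner_self:
  "(w has_vector_derivative v) (at s) \<Longrightarrow> ((\<lambda>s. w s \<bullet> w s) has_real_derivative 2 * (w s \<bullet> v)) (at s)"
  using bounded_bilinear.has_vector_derivative[OF bounded_bilinear_inner, of w v s UNIV w v]
  by (simp add: has_real_derivative_iff_has_vector_derivative inner_commute)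

lemma eq_if_deriv_diff_le:
  fixes x y :: "real \<Rightarrow> 'a::real_inner"
  assumes dx: "\<And>s. 0 \<le> s \<Longrightarrow> (x has_vector_derivative f s) (at s within {0..})"
    and dy: "\<And>s. 0 \<le> s \<Longrightarrow> (y has_vector_derivative g s) (at s within {0..})"
    and "x 0 = y 0" and "0 \<le> K"
    and le: "\<And>s. 0 \<le> s \<Longrightarrow> s \<le> t \<Longrightarrow> norm (f s - g s) \<le> K * norm (x s - y s)"
    and "0 \<le> t"
  shows "x t = y t"
proof -
  define w where "w s = x s - y s" for s
  define e where "e s = (w s \<bullet> w s) * exp (- 2 * K * s)" for s
  have dw: "(w has_vector_derivative f s - g s) (at s within {0..})" if "0 \<le> s" for s
    unfolding w_def using dx[OF that] dy[OF that] by (rule has_vector_derivative_diff)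
  have "continuous_on {0..t} e"
    unfolding e_def using dw
    by (intro continuous_intros continuous_on_subset[OF continuous_on_vector_derivative[of "{0..}" w]]) auto
  moreover have "\<exists>D. (e has_real_derivative D) (at s) \<and> D \<le> 0" if s: "0 < s" "s < t" for s
  proof -
    define v where "v = f s - g s"
    have "(w has_vector_derivative v) (at s)"
      using dw[of s] s at_within_interior[of s "{0..}"] by (simp add: v_def)
    then have "(e has_real_derivative 2 * exp (- 2 * K * s) * (w s \<bullet> v - K * (w s \<bullet> w s))) (at s)"
      unfolding e_def by (auto dest!: has_real_derivative_inner_self intro!: derivative_eq_intros
          simp: algebra_simps)
    moreover have "w s \<bullet> v \<le> K * (w s \<bullet> w s)"
    proof -
      have "w s \<bullet> v \<le> norm (w s) * norm v"
        by (rule norm_cauchy_schwarz)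
      also have "\<dots> \<le> norm (w s) * (K * norm (w s))"
        using le[of s] s by (intro mult_left_mono) (auto simp: w_def v_def)
      finally show ?thesis
        by (simp add: power2_norm_eq_inner[symmetric] power2_eq_square mult.assoc mult.left_commute)
    qed
    ultimately show ?thesis
      by (auto simp: mult_nonneg_nonpos)
  qed
  ultimately have "e t \<le> e 0"
    using DERIV_nonpos_imp_decreasing_open[OF \<open>0 \<le> t\<close>] by blast
  then have "w t \<bullet> w t \<le> 0"
    by (simp add: e_def w_def \<open>x 0 = y 0\<close> mult_le_0_iff)
  then have "w t = 0"
    using inner_ge_zero[of "w t"] by simp
  then show ?thesis
    by (simp add: w_def)
qed

lemma ivp_solution_unique:
  fixes f :: "real \<Rightarrow> 'a::real_inner \<Rightarrow> 'a"
  assumes lip: "\<And>S. bounded S \<Longrightarrow> \<exists>L. \<forall>t\<ge>0. lipschitz_on L S (f t)"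
    and dx: "\<And>s. 0 \<le> s \<Longrightarrow> (x has_vector_derivative f s (x s)) (at s within {0..})"
    and dy: "\<And>s. 0 \<le> s \<Longrightarrow> (y has_vector_derivative f s (y s)) (at s within {0..})"
    and "x 0 = y 0" "0 \<le> t"
  shows "x t = y t"
proof -
  have "continuous_on {0..} x" "continuous_on {0..} y"
    using dx dy by (auto intro!: continuous_on_vector_derivative)
  then have "compact (x ` {0..t} \<union> y ` {0..t})"
    by (intro compact_Un compact_continuous_image compact_Icc) (auto elim: continuous_on_subset)
  then obtain L where L: "\<And>s. 0 \<le> s \<Longrightarrow> lipschitz_on L (x ` {0..t} \<union> y ` {0..t}) (f s)"
    using lip compact_imp_bounded by blast
  show ?thesis
  proof (rule eq_if_deriv_diff_le[OF dx dy \<open>x 0 = y 0\<close> _ _ \<open>0 \<le> t\<close>])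
    show "0 \<le> L"
      using L[of 0] lipschitz_on_nonneg by simp
    fix s
    assume "0 \<le> s" "s \<le> t"
    then show "norm (f s (x s) - f s (y s)) \<le> L * norm (x s - y s)"
      by (intro lipschitz_on_normD[OF L]) auto
  qed
qed

section \<open>Invariant boxes\<close>

lemma le_if_DERIV_nonpos_above:
  fixes u :: "real \<Rightarrow> real"
  assumes du: "\<And>s. 0 \<le> s \<Longrightarrow> (u has_real_derivative u' s) (at s within {0..})"
    and "u 0 \<le> M" and nonpos: "\<And>s. 0 < s \<Longrightarrow> M < u s \<Longrightarrow> u' s \<le> 0"
    and "0 \<le> t"
  shows "u t \<le> M"
proof (rule ccontr)
  assume "\<not> u t \<le> M"
  have u: "continuous_on {0..} u"
    using du by (intro DERIV_continuous_on) auto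
  define S where "S = {0..t} \<inter> u -` {..M}"
  have "compact S"
    unfolding S_def compact_eq_bounded_closed
    by (auto intro!: bounded_Int continuous_closed_preimage continuous_on_subset[OF u])
  moreover have "0 \<in> S"
    using \<open>u 0 \<le> M\<close> \<open>0 \<le> t\<close> by (simp add: S_def)
  ultimately obtain s0 where "s0 \<in> S" and last: "\<And>s. s \<in> S \<Longrightarrow> s \<le> s0"
    using compact_attains_sup[of S] by blast
  then have s0: "0 \<le> s0" "s0 \<le> t" "u s0 \<le> M"
    by (auto simp: S_def)
  have "\<exists>D. (u has_real_derivative D) (at s) \<and> D \<le> 0" if "s0 < s" "s < t" for s
  proof -
    have "M < u s"
      using last[of s] that s0 by (force simp: S_def)
    moreover have "(u has_real_derivative u' s) (at s)"
      using du[of s] that s0 at_within_interior[of s "{0..}"] by simp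
    ultimately show ?thesis
      using nonpos[of s] that s0 by auto
  qed
  then have "u t \<le> u s0"
    using DERIV_nonpos_imp_decreasing_open[OF \<open>s0 \<le> t\<close>] continuous_on_subset[OF u] s0 by auto
  with \<open>\<not> u t \<le> M\<close> s0 show False
    by simp
qed

lemma ge_if_DERIV_nonneg_below:
  fixes u :: "real \<Rightarrow> real"
  assumes du: "\<And>s. 0 \<le> s \<Longrightarrow> (u has_real_derivative u' s) (at s within {0..})"
    and "m \<le> u 0" and nonneg: "\<And>s. 0 < s \<Longrightarrow> u s < m \<Longrightarrow> 0 \<le> u' s"
    and "0 \<le> t"
  shows "m \<le> u t"
proof -
  have "- u t \<le> - m"
  proof (rule le_if_DERIV_nonpos_above[where u = "\<lambda>s. - u s" and u' = "\<lambda>s. - u' s"])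
    show "((\<lambda>s. - u s) has_real_derivative - u' s) (at s within {0..})" if "0 \<le> s" for s
      using du[OF that] by (rule DERIV_minus)
  qed (use assms in auto)
  then show ?thesis
    by simp
qed

lemma inner_clamp:
  fixes a b x :: "'a::euclidean_space"
  assumes "\<forall>k\<in>Basis. a \<bullet> k \<le> b \<bullet> k" "i \<in> Basis"
  shows "clamp a b x \<bullet> i = max (a \<bullet> i) (min (b \<bullet> i) (x \<bullet> i))"
  using assms by (auto simp: clamp_def max_def min_def)

lemma lipschitz_on_clamp: "lipschitz_on 1 UNIV (clamp a b)"
  by (intro lipschitz_onI) (simp_all add: dist_clamps_le_dist_args)

lemma clamped_solution_mem_cbox:
  fixes x :: "real \<Rightarrow> 'a::euclidean_space"
  assumes ab: "\<forall>k\<in>Basis. a \<bullet> k \<le> b \<bullet> k"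
    and x0: "x 0 \<in> cbox a b"
    and dx: "\<And>t. 0 \<le> t \<Longrightarrow> (x has_vector_derivative f t (clamp a b (x t))) (at t within {0..})"
    and inward: "\<And>t p k. 0 < t \<Longrightarrow> p \<in> cbox a b \<Longrightarrow> k \<in> Basis \<Longrightarrow>
        (p \<bullet> k = b \<bullet> k \<longrightarrow> f t p \<bullet> k \<le> 0) \<and> (p \<bullet> k = a \<bullet> k \<longrightarrow> 0 \<le> f t p \<bullet> k)"
    and "0 \<le> t"
  shows "x t \<in> cbox a b"
  unfolding mem_box
proof
  fix k :: 'a
  assume k: "k \<in> Basis"
  have du: "((\<lambda>s. x s \<bullet> k) has_real_derivative f s (clamp a b (x s)) \<bullet> k) (at s within {0..})"
    if "0 \<le> s" for s
    using bounded_linear.has_vector_derivative[OF bounded_linear_inner_left dx[OF that]]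
    unfolding has_real_derivative_iff_has_vector_derivative .
  have clamp_mem: "clamp a b (x s) \<in> cbox a b" for s
    using ab by (intro clamp_in_interval) blast
  have clamp_k: "clamp a b (x s) \<bullet> k = max (a \<bullet> k) (min (b \<bullet> k) (x s \<bullet> k))" for s
    by (rule inner_clamp[OF ab k])
  have x0k: "a \<bullet> k \<le> x 0 \<bullet> k" "x 0 \<bullet> k \<le> b \<bullet> k"
    using x0 k unfolding mem_box by blast+
  have "x t \<bullet> k \<le> b \<bullet> k"
  proof (rule le_if_DERIV_nonpos_above[OF du _ _ \<open>0 \<le> t\<close>])
    fix s
    assume "0 < s" "b \<bullet> k < x s \<bullet> k"
    then have "clamp a b (x s) \<bullet> k = b \<bullet> k"
      using ab k clamp_k[of s] by auto
    then show "f s (clamp a b (x s)) \<bullet> k \<le> 0"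
      using inward[OF \<open>0 < s\<close> clamp_mem k] by blast
  qed (simp_all add: x0k)
  moreover have "a \<bullet> k \<le> x t \<bullet> k"
  proof (rule ge_if_DERIV_nonneg_below[OF du _ _ \<open>0 \<le> t\<close>])
    fix s
    assume "0 < s" "x s \<bullet> k < a \<bullet> k"
    then have "clamp a b (x s) \<bullet> k = a \<bullet> k"
      using clamp_k[of s] by auto
    then show "0 \<le> f s (clamp a b (x s)) \<bullet> k"
      using inward[OF \<open>0 < s\<close> clamp_mem k] by blast
  qed (simp_all add: x0k)
  ultimately show "a \<bullet> k \<le> x t \<bullet> k \<and> x t \<bullet> k \<le> b \<bullet> k"
    by simp
qed

section \<open>The tumour model\<close>

lemma has_vector_derivative_Pair_iff:
  "((\<lambda>t. (f t, g t)) has_vector_derivative (f', g')) (at x within S) \<longleftrightarrow>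
     (f has_vector_derivative f') (at x within S) \<and> (g has_vector_derivative g') (at x within S)"
  using bounded_linear.has_vector_derivative[OF bounded_linear_fst, of "\<lambda>t. (f t, g t)"]
    bounded_linear.has_vector_derivative[OF bounded_linear_snd, of "\<lambda>t. (f t, g t)"]
  by (auto intro: has_vector_derivative_Pair)

lemma Basis_real_prod4:
  "(Basis :: (real \<times> real \<times> real \<times> real) set) = {(1, 0, 0, 0), (0, 1, 0, 0), (0, 0, 1, 0), (0, 0, 0, 1)}"
  by (simp add: Basis_prod_def zero_prod_def insert_commute)

lemma abs_le_norm_prod4:
  fixes p1 p2 p3 p4 :: real
  shows "\<bar>p1\<bar> \<le> norm (p1, p2, p3, p4)" "\<bar>p2\<bar> \<le> norm (p1, p2, p3, p4)"
    "\<bar>p3\<bar> \<le> norm (p1, p2, p3, p4)" "\<bar>p4\<bar> \<le> norm (p1, p2, p3, p4)"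
  using norm_fst_le[where x=p1 and y="(p2, p3, p4)"] norm_snd_le[where x=p1 and y="(p2, p3, p4)"]
    norm_fst_le[where x=p2 and y="(p3, p4)"] norm_snd_le[where x=p2 and y="(p3, p4)"]
    norm_fst_le[where x=p3 and y=p4] norm_snd_le[where x=p3 and y=p4]
  by auto

lemma norm_prod4_le:
  fixes p1 p2 p3 p4 :: real
  shows "norm (p1, p2, p3, p4) \<le> \<bar>p1\<bar> + \<bar>p2\<bar> + \<bar>p3\<bar> + \<bar>p4\<bar>"
  using norm_Pair_le[of p1 "(p2, p3, p4)"] norm_Pair_le[of p2 "(p3, p4)"] norm_Pair_le[of p3 p4]
  by simp

lemma abs_mult_diff_le:
  fixes x y x' y' R N :: real
  assumes "\<bar>x\<bar> \<le> R" "\<bar>y'\<bar> \<le> R" "\<bar>x - x'\<bar> \<le> N" "\<bar>y - y'\<bar> \<le> N"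
  shows "\<bar>x * y - x' * y'\<bar> \<le> 2 * R * N"
proof -
  have "x * y - x' * y' = x * (y - y') + y' * (x - x')"
    by (simp add: algebra_simps)
  then have "\<bar>x * y - x' * y'\<bar> \<le> \<bar>x\<bar> * \<bar>y - y'\<bar> + \<bar>y'\<bar> * \<bar>x - x'\<bar>"
    by (simp add: abs_mult[symmetric] abs_triangle_ineq)
  also have "\<dots> \<le> R * N + R * N"
    using assms by (intro add_mono mult_mono) auto
  finally show ?thesis
    by (simp add: algebra_simps)
qed

lemma abs_mult_left_diff_le:
  fixes c a b B :: real
  assumes "\<bar>a - b\<bar> \<le> B"
  shows "\<bar>c * a - c * b\<bar> \<le> \<bar>c\<bar> * B"
  using mult_left_mono[OF assms abs_ge_zero[of c]] by (simp add: abs_mult flip: right_diff_distrib)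

lemma logistic_diff_le:
  fixes p1 p2 p3 q1 q2 q3 a d R N :: real
  assumes "\<bar>p1\<bar> \<le> R" "\<bar>q1\<bar> \<le> R" "\<bar>q2\<bar> \<le> R" "\<bar>q3\<bar> \<le> R"
    and "\<bar>p1 - q1\<bar> \<le> N" "\<bar>p2 - q2\<bar> \<le> N" "\<bar>p3 - q3\<bar> \<le> N"
  shows "\<bar>p1 * (1 - p1 - a * p2 - d * p3) - q1 * (1 - q1 - a * q2 - d * q3)\<bar>
    \<le> (1 + 2 * R * (1 + \<bar>a\<bar> + \<bar>d\<bar>)) * N"
proof -
  have sq: "\<bar>p1 * p1 - q1 * q1\<bar> \<le> 2 * R * N"
    by (intro abs_mult_diff_le assms)
  have a: "\<bar>a * (p1 * p2 - q1 * q2)\<bar> \<le> \<bar>a\<bar> * (2 * R * N)"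
    unfolding abs_mult by (intro mult_left_mono abs_mult_diff_le assms) simp
  have d: "\<bar>d * (p1 * p3 - q1 * q3)\<bar> \<le> \<bar>d\<bar> * (2 * R * N)"
    unfolding abs_mult by (intro mult_left_mono abs_mult_diff_le assms) simp
  have "p1 * (1 - p1 - a * p2 - d * p3) - q1 * (1 - q1 - a * q2 - d * q3)
      = (p1 - q1) - (p1 * p1 - q1 * q1) - a * (p1 * p2 - q1 * q2) - d * (p1 * p3 - q1 * q3)"
    by (simp add: algebra_simps)
  also have "\<bar>\<dots>\<bar> \<le> \<bar>p1 - q1\<bar> + \<bar>p1 * p1 - q1 * q1\<bar> + \<bar>a * (p1 * p2 - q1 * q2)\<bar> + \<bar>d * (p1 * p3 - q1 * q3)\<bar>"
    by linarith
  also have "\<dots> \<le> N + 2 * R * N + \<bar>a\<bar> * (2 * R * N) + \<bar>d\<bar> * (2 * R * N)"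
    by (intro add_mono assms(5) sq a d)
  also have "\<dots> = (1 + 2 * R * (1 + \<bar>a\<bar> + \<bar>d\<bar>)) * N"
    by (simp add: algebra_simps)
  finally show ?thesis .
qed

context
  fixes \<alpha>1 \<alpha>2 \<beta>2 \<beta>3 \<beta>4 \<delta>1 \<delta>2 \<delta>4 :: real and i :: "real \<Rightarrow> real"
begin

definition tumour_field :: "real \<Rightarrow> real \<times> real \<times> real \<times> real \<Rightarrow> real \<times> real \<times> real \<times> real" where
  "tumour_field t = (\<lambda>(u1, u2, u3, u4).
     (u1 * (1 - u1 - \<alpha>1 * u2 - \<delta>1 * u3),
      \<beta>2 * u2 * (1 - u2 - \<alpha>2 * u1 - \<delta>2 * u4),
      \<beta>3 * (u2 - u3),
      \<beta>4 * (i t - u4 - \<delta>4 * u4 * u2)))"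

lemma tumour_sol_iff_has_vector_derivative:
  "tumour_sol \<alpha>1 \<alpha>2 \<beta>2 \<beta>3 \<beta>4 \<delta>1 \<delta>2 \<delta>4 i a1 a2 a3 a4 u1 u2 u3 u4 \<longleftrightarrow>
     (u1 0, u2 0, u3 0, u4 0) = (a1, a2, a3, a4) \<and>
     (\<forall>t\<ge>0. ((\<lambda>t. (u1 t, u2 t, u3 t, u4 t)) has_vector_derivative
        tumour_field t (u1 t, u2 t, u3 t, u4 t)) (at t within {0..}))"
  by (simp add: tumour_sol_def tumour_field_def has_vector_derivative_Pair_iff
      has_real_derivative_iff_has_vector_derivative)

definition tumour_lipschitz_bound :: "real \<Rightarrow> real" where
  "tumour_lipschitz_bound R = (1 + 2 * R * (1 + \<bar>\<alpha>1\<bar> + \<bar>\<delta>1\<bar>)) + \<bar>\<beta>2\<bar> * (1 + 2 * R * (1 + \<bar>\<alpha>2\<bar> + \<bar>\<delta>2\<bar>))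
     + \<bar>\<beta>3\<bar> * 2 + \<bar>\<beta>4\<bar> * (1 + 2 * R * \<bar>\<delta>4\<bar>)"

lemma norm_tumour_field_diff_le:
  fixes p1 p2 p3 p4 q1 q2 q3 q4 :: real
  assumes R: "\<bar>p1\<bar> \<le> R" "\<bar>p2\<bar> \<le> R" "\<bar>p4\<bar> \<le> R" "\<bar>q1\<bar> \<le> R" "\<bar>q2\<bar> \<le> R" "\<bar>q3\<bar> \<le> R" "\<bar>q4\<bar> \<le> R"
    and N: "\<bar>p1 - q1\<bar> \<le> N" "\<bar>p2 - q2\<bar> \<le> N" "\<bar>p3 - q3\<bar> \<le> N" "\<bar>p4 - q4\<bar> \<le> N"
  shows "norm (tumour_field t (p1, p2, p3, p4) - tumour_field t (q1, q2, q3, q4)) \<le> tumour_lipschitz_bound R * N"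
proof -
  have d1: "\<bar>p1 * (1 - p1 - \<alpha>1 * p2 - \<delta>1 * p3) - q1 * (1 - q1 - \<alpha>1 * q2 - \<delta>1 * q3)\<bar>
      \<le> (1 + 2 * R * (1 + \<bar>\<alpha>1\<bar> + \<bar>\<delta>1\<bar>)) * N"
    by (intro logistic_diff_le R N)
  have "\<bar>p2 * (1 - p2 - \<alpha>2 * p1 - \<delta>2 * p4) - q2 * (1 - q2 - \<alpha>2 * q1 - \<delta>2 * q4)\<bar>
      \<le> (1 + 2 * R * (1 + \<bar>\<alpha>2\<bar> + \<bar>\<delta>2\<bar>)) * N"
    by (intro logistic_diff_le R N)
  then have d2: "\<bar>\<beta>2 * p2 * (1 - p2 - \<alpha>2 * p1 - \<delta>2 * p4) - \<beta>2 * q2 * (1 - q2 - \<alpha>2 * q1 - \<delta>2 * q4)\<bar>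
      \<le> \<bar>\<beta>2\<bar> * ((1 + 2 * R * (1 + \<bar>\<alpha>2\<bar> + \<bar>\<delta>2\<bar>)) * N)"
    using abs_mult_left_diff_le by (simp add: mult.assoc)
  have "\<bar>(p2 - p3) - (q2 - q3)\<bar> \<le> 2 * N"
    using N(2,3) by linarith
  then have d3: "\<bar>\<beta>3 * (p2 - p3) - \<beta>3 * (q2 - q3)\<bar> \<le> \<bar>\<beta>3\<bar> * (2 * N)"
    by (rule abs_mult_left_diff_le)
  have "\<bar>p4 * p2 - q4 * q2\<bar> \<le> 2 * R * N"
    by (intro abs_mult_diff_le R N)
  then have "\<bar>\<delta>4 * (p4 * p2 - q4 * q2)\<bar> \<le> \<bar>\<delta>4\<bar> * (2 * R * N)"
    by (simp add: abs_mult mult_left_mono)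
  moreover have "(i t - p4 - \<delta>4 * p4 * p2) - (i t - q4 - \<delta>4 * q4 * q2) = - (p4 - q4) - \<delta>4 * (p4 * p2 - q4 * q2)"
    by (simp add: algebra_simps)
  ultimately have "\<bar>(i t - p4 - \<delta>4 * p4 * p2) - (i t - q4 - \<delta>4 * q4 * q2)\<bar> \<le> (1 + 2 * R * \<bar>\<delta>4\<bar>) * N"
    using N(4) by (simp add: algebra_simps)
  then have d4: "\<bar>\<beta>4 * (i t - p4 - \<delta>4 * p4 * p2) - \<beta>4 * (i t - q4 - \<delta>4 * q4 * q2)\<bar>
      \<le> \<bar>\<beta>4\<bar> * ((1 + 2 * R * \<bar>\<delta>4\<bar>) * N)"
    by (rule abs_mult_left_diff_le)
  have "norm (tumour_field t (p1, p2, p3, p4) - tumour_field t (q1, q2, q3, q4))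
      \<le> \<bar>p1 * (1 - p1 - \<alpha>1 * p2 - \<delta>1 * p3) - q1 * (1 - q1 - \<alpha>1 * q2 - \<delta>1 * q3)\<bar>
       + \<bar>\<beta>2 * p2 * (1 - p2 - \<alpha>2 * p1 - \<delta>2 * p4) - \<beta>2 * q2 * (1 - q2 - \<alpha>2 * q1 - \<delta>2 * q4)\<bar>
       + \<bar>\<beta>3 * (p2 - p3) - \<beta>3 * (q2 - q3)\<bar>
       + \<bar>\<beta>4 * (i t - p4 - \<delta>4 * p4 * p2) - \<beta>4 * (i t - q4 - \<delta>4 * q4 * q2)\<bar>"
    unfolding tumour_field_def case_prod_conv diff_Pair by (rule norm_prod4_le)
  also have "\<dots> \<le> tumour_lipschitz_bound R * N"
    using d1 d2 d3 d4 unfolding tumour_lipschitz_bound_def by (simp add: algebra_simps)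
  finally show ?thesis .
qed

lemma tumour_field_lipschitz_on_bounded:
  assumes "bounded S"
  shows "\<exists>L. \<forall>t. lipschitz_on L S (tumour_field t)"
proof -
  obtain R where R: "0 < R" "\<And>p. p \<in> S \<Longrightarrow> norm p \<le> R"
    using assms by (auto simp: bounded_pos)
  have "norm (tumour_field t p - tumour_field t q) \<le> tumour_lipschitz_bound R * norm (p - q)"
    if "p \<in> S" "q \<in> S" for t p q
  proof -
    obtain p1 p2 p3 p4 q1 q2 q3 q4 where pq: "p = (p1, p2, p3, p4)" "q = (q1, q2, q3, q4)"
      by (cases p, cases q)
    have "norm (p1, p2, p3, p4) \<le> R" "norm (q1, q2, q3, q4) \<le> R"
      using R(2) that unfolding pq by blast+
    moreover have "norm (p1 - q1, p2 - q2, p3 - q3, p4 - q4) \<le> norm (p - q)"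
      by (simp add: pq)
    ultimately show ?thesis
      unfolding pq by (intro norm_tumour_field_diff_le) (meson abs_le_norm_prod4 order_trans)+
  qed
  moreover have "0 \<le> tumour_lipschitz_bound R"
    using R(1) by (simp add: tumour_lipschitz_bound_def)
  ultimately show ?thesis
    unfolding lipschitz_on_def dist_norm by blast
qed

lemma tumour_sol_unique:
  assumes "tumour_sol \<alpha>1 \<alpha>2 \<beta>2 \<beta>3 \<beta>4 \<delta>1 \<delta>2 \<delta>4 i a1 a2 a3 a4 u1 u2 u3 u4"
    and "tumour_sol \<alpha>1 \<alpha>2 \<beta>2 \<beta>3 \<beta>4 \<delta>1 \<delta>2 \<delta>4 i a1 a2 a3 a4 v1 v2 v3 v4" and "0 \<le> t"
  shows "v1 t = u1 t \<and> v2 t = u2 t \<and> v3 t = u3 t \<and> v4 t = u4 t"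
proof -
  have "(v1 t, v2 t, v3 t, v4 t) = (u1 t, u2 t, u3 t, u4 t)"
  proof (rule ivp_solution_unique[where f = tumour_field
        and x = "\<lambda>s. (v1 s, v2 s, v3 s, v4 s)" and y = "\<lambda>s. (u1 s, u2 s, u3 s, u4 s)"])
    show "\<exists>L. \<forall>t\<ge>0. lipschitz_on L S (tumour_field t)" if "bounded S" for S
      using tumour_field_lipschitz_on_bounded[OF that] by blast
  qed (use assms in \<open>auto simp: tumour_sol_iff_has_vector_derivative\<close>)
  then show ?thesis
    by simp
qed

lemma tumour_field_inward:
  assumes nonneg: "0 \<le> \<alpha>1" "0 \<le> \<alpha>2" "0 \<le> \<beta>2" "0 \<le> \<beta>3" "0 \<le> \<beta>4" "0 \<le> \<delta>1" "0 \<le> \<delta>2" "0 \<le> \<delta>4"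
    and M: "1 \<le> M" "\<forall>t>0. 0 \<le> i t \<and> i t \<le> M"
    and "0 < t" "p \<in> cbox (0, 0, 0, 0) (M, M, M, M)" "k \<in> Basis"
  shows "(p \<bullet> k = (M, M, M, M) \<bullet> k \<longrightarrow> tumour_field t p \<bullet> k \<le> 0)
    \<and> (p \<bullet> k = (0, 0, 0, 0) \<bullet> k \<longrightarrow> 0 \<le> tumour_field t p \<bullet> k)"
proof -
  obtain p1 p2 p3 p4 where p_eq: "p = (p1, p2, p3, p4)"
    by (cases p)
  have box: "0 \<le> p1" "p1 \<le> M" "0 \<le> p2" "p2 \<le> M" "0 \<le> p3" "p3 \<le> M" "0 \<le> p4" "p4 \<le> M"
    using \<open>p \<in> cbox (0, 0, 0, 0) (M, M, M, M)\<close> unfolding p_eq by (simp_all add: cbox_Pair_eq)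
  have i: "0 \<le> i t" "i t \<le> M"
    using M(2) \<open>0 < t\<close> by simp_all
  have prods: "0 \<le> \<alpha>1 * p2" "0 \<le> \<delta>1 * p3" "0 \<le> \<alpha>2 * p1" "0 \<le> \<delta>2 * p4" "0 \<le> \<delta>4 * M * p2"
    using M(1) nonneg box by simp_all
  have "M * (1 - M - \<alpha>1 * p2 - \<delta>1 * p3) \<le> 0"
    using M(1) prods by (intro mult_nonneg_nonpos) auto
  moreover have "\<beta>2 * M * (1 - M - \<alpha>2 * p1 - \<delta>2 * p4) \<le> 0"
    using M(1) nonneg prods by (intro mult_nonneg_nonpos) auto
  moreover have "\<beta>3 * (p2 - M) \<le> 0" "0 \<le> \<beta>3 * p2"
    using nonneg box by (simp_all add: mult_nonneg_nonpos)
  moreover have "\<beta>4 * (i t - M - \<delta>4 * M * p2) \<le> 0" "0 \<le> \<beta>4 * i t"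
    using i nonneg prods by (simp_all add: mult_nonneg_nonpos)
  ultimately show ?thesis
    using \<open>k \<in> Basis\<close> unfolding Basis_real_prod4 by (auto simp: p_eq tumour_field_def)
qed

lemma clamped_tumour_field_lipschitz_ivp:
  assumes "continuous_on {0..} i" and "0 \<le> M"
  obtains L where "lipschitz_ivp (\<lambda>t p. tumour_field t (clamp (0, 0, 0, 0) (M, M, M, M) p)) L"
proof -
  let ?box = "cbox (0, 0, 0, 0) (M, M, M, M)"
  obtain L where L: "\<And>t. lipschitz_on L ?box (tumour_field t)"
    using tumour_field_lipschitz_on_bounded[OF bounded_cbox] by blast
  have "lipschitz_ivp (\<lambda>t p. tumour_field t (clamp (0, 0, 0, 0) (M, M, M, M) p)) L"
  proof
    show "continuous_on {0..} (\<lambda>t. tumour_field t (clamp (0, 0, 0, 0) (M, M, M, M) p))" for p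
      by (simp add: tumour_field_def case_prod_beta) (intro continuous_intros assms(1))
    have "range (clamp (0, 0, 0, 0) (M, M, M, M)) \<subseteq> ?box"
      using \<open>0 \<le> M\<close> by (intro image_subsetI clamp_in_interval) (auto simp: Basis_real_prod4)
    then show "lipschitz_on L UNIV (\<lambda>p. tumour_field t (clamp (0, 0, 0, 0) (M, M, M, M) p))" for t
      using lipschitz_on_compose2[OF lipschitz_on_clamp lipschitz_on_subset[OF L]] by simp
  qed
  then show ?thesis
    by (rule that)
qed

lemma tumour_field_solution_exists:
  assumes nonneg: "0 \<le> \<alpha>1" "0 \<le> \<alpha>2" "0 \<le> \<beta>2" "0 \<le> \<beta>3" "0 \<le> \<beta>4" "0 \<le> \<delta>1" "0 \<le> \<delta>2" "0 \<le> \<delta>4"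
    and i: "continuous_on {0..} i" "\<forall>t\<ge>0. 0 \<le> i t \<and> i t \<le> iM"
    and a: "0 \<le> a1" "0 \<le> a2" "0 \<le> a3" "0 \<le> a4"
  obtains x where "x 0 = (a1, a2, a3, a4)"
    and "\<And>t. 0 \<le> t \<Longrightarrow> (x has_vector_derivative tumour_field t (x t)) (at t within {0..})"
    and "\<And>t. 0 \<le> t \<Longrightarrow> x t \<in> {0..} \<times> {0..} \<times> {0..} \<times> {0..}"
proof -
  define M where "M = max 1 (max iM (max a1 (max a2 (max a3 a4))))"
  have M: "1 \<le> M" "iM \<le> M" "a1 \<le> M" "a2 \<le> M" "a3 \<le> M" "a4 \<le> M"
    by (simp_all add: M_def le_max_iff_disj)
  let ?box = "cbox (0, 0, 0, 0) (M, M, M, M)"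
  have "0 \<le> M"
    using M(1) by simp
  then obtain L where "lipschitz_ivp (\<lambda>t p. tumour_field t (clamp (0, 0, 0, 0) (M, M, M, M) p)) L"
    by (rule clamped_tumour_field_lipschitz_ivp[OF i(1)])
  then obtain x where x0: "x 0 = (a1, a2, a3, a4)" and dx: "\<And>t. 0 \<le> t \<Longrightarrow>
      (x has_vector_derivative tumour_field t (clamp (0, 0, 0, 0) (M, M, M, M) (x t))) (at t within {0..})"
    using lipschitz_ivp.exists_solution by blast
  have "\<forall>k\<in>Basis. (0, 0, 0, 0) \<bullet> k \<le> (M, M, M, M) \<bullet> k"
    using M by (simp add: Basis_real_prod4)
  moreover have "x 0 \<in> ?box"
    using a M by (simp add: x0 cbox_Pair_eq)
  moreover have "\<forall>t>0. 0 \<le> i t \<and> i t \<le> M"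
    using i(2) M(2) by (metis less_imp_le order_trans)
  ultimately have box: "x t \<in> ?box" if "0 \<le> t" for t
    using clamped_solution_mem_cbox[OF _ _ dx tumour_field_inward[OF nonneg M(1)] that] by blast
  show ?thesis
  proof (rule that[where x = x])
    show "x 0 = (a1, a2, a3, a4)"
      by (rule x0)
    show "(x has_vector_derivative tumour_field t (x t)) (at t within {0..})" if "0 \<le> t" for t
      using dx[OF that] box[OF that] by simp
    show "x t \<in> {0..} \<times> {0..} \<times> {0..} \<times> {0..}" if "0 \<le> t" for t
      using box[OF that] by (cases "x t") (simp add: cbox_Pair_eq)
  qed
qed

end

theorem theorem2p1:
  fixes \<alpha>1 \<alpha>2 \<beta>2 \<beta>3 \<beta>4 \<delta>1 \<delta>2 \<delta>4 iM a1 a2 a3 a4 :: real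
    and i :: "real \<Rightarrow> real"
  assumes "\<alpha>1 > 0" "\<alpha>2 > 0" "\<beta>2 > 0" "\<beta>3 > 0" "\<beta>4 > 0"
    and "\<delta>1 > 0" "\<delta>2 > 0" "\<delta>4 > 0" and "iM > 0"
    and "continuous_on {0..} i" and "\<forall>t\<ge>0. 0 \<le> i t \<and> i t \<le> iM"
    and "a1 \<ge> 0" "a2 \<ge> 0" "a3 \<ge> 0" "a4 \<ge> 0"
  shows "\<exists>u1 u2 u3 u4.
           tumour_sol \<alpha>1 \<alpha>2 \<beta>2 \<beta>3 \<beta>4 \<delta>1 \<delta>2 \<delta>4 i a1 a2 a3 a4 u1 u2 u3 u4 \<and>
           (\<forall>t\<ge>0. u1 t \<ge> 0 \<and> u2 t \<ge> 0 \<and> u3 t \<ge> 0 \<and> u4 t \<ge> 0) \<and>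
           (\<forall>v1 v2 v3 v4.
              tumour_sol \<alpha>1 \<alpha>2 \<beta>2 \<beta>3 \<beta>4 \<delta>1 \<delta>2 \<delta>4 i a1 a2 a3 a4 v1 v2 v3 v4 \<longrightarrow>
              (\<forall>t\<ge>0. v1 t = u1 t \<and> v2 t = u2 t \<and> v3 t = u3 t \<and> v4 t = u4 t))"
proof -
  have "0 \<le> \<alpha>1" "0 \<le> \<alpha>2" "0 \<le> \<beta>2" "0 \<le> \<beta>3" "0 \<le> \<beta>4" "0 \<le> \<delta>1" "0 \<le> \<delta>2" "0 \<le> \<delta>4"
    using assms(1-8) by simp_all
  from tumour_field_solution_exists[OF this assms(10-15)]
  obtain x where x0: "x 0 = (a1, a2, a3, a4)"
    and x: "\<And>t. 0 \<le> t \<Longrightarrow> (x has_vector_derivative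
      tumour_field \<alpha>1 \<alpha>2 \<beta>2 \<beta>3 \<beta>4 \<delta>1 \<delta>2 \<delta>4 i t (x t)) (at t within {0..})"
    and x_nonneg: "\<And>t. 0 \<le> t \<Longrightarrow> x t \<in> {0..} \<times> {0..} \<times> {0..} \<times> {0..}"
    by blast
  define u1 u2 u3 u4 where "u1 t = fst (x t)" and "u2 t = fst (snd (x t))"
    and "u3 t = fst (snd (snd (x t)))" and "u4 t = snd (snd (snd (x t)))" for t
  have x_eq: "x = (\<lambda>t. (u1 t, u2 t, u3 t, u4 t))"
    by (simp add: fun_eq_iff u1_def u2_def u3_def u4_def)
  have sol: "tumour_sol \<alpha>1 \<alpha>2 \<beta>2 \<beta>3 \<beta>4 \<delta>1 \<delta>2 \<delta>4 i a1 a2 a3 a4 u1 u2 u3 u4"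
    using x0 x unfolding tumour_sol_iff_has_vector_derivative x_eq by simp
  moreover have "\<forall>t\<ge>0. u1 t \<ge> 0 \<and> u2 t \<ge> 0 \<and> u3 t \<ge> 0 \<and> u4 t \<ge> 0"
    using x_nonneg unfolding x_eq by simp
  ultimately show ?thesis
    using tumour_sol_unique[OF sol] by blast
qed

end
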